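(* Let $G$ be a simple connected graph and let $v$ be a real eigenvector of $\mathcal M$ with $\mathcal Mv=\mu v$, $\mu>0$. Let $S=\{i: v_i\ge0\}$ and let $\theta\in[0,\pi/2)$ be the angle between $|v|=(|v_1|,\dots,|v_n|)^{\mathsf T}$ and $\delta$, i.e. $\cos\theta=\delta^{\mathsf T}|v|/(\|v\|_2\|\delta\|_2)$. If $$\mu+1>4\,\frac{\mathrm{vol}\, S\,\mathrm{vol}\, \bar S}{(\mathrm{vol}\, V)^2}\,\frac{1}{\cos^2\theta},$$ then $Q(S)>0$.
   Context: $G=(V,E)$ is a finite, undirected, unweighted, simple connected graph with adjacency matrix $A$, degrees $d_i$, $D=\mathrm{Diag}(d_i)$, $\delta=(\sqrt{d_1},\dots,\sqrt{d_n})^{\mathsf T}$, $\mathrm{vol}\, S=\sum_{i\in S}d_i$, $\bar S=V\setminus S$, $\mathbb 1_S$ the characteristic vector of $S$. $\mathcal M=D^{-1/2}AD^{-1/2}-\frac{1}{\mathrm{vol}\, V}\delta\delta^{\mathsf T}$. The modularity of $S$ is $Q(S)=\mathbb 1_S^{\mathsf T}A\mathbb 1_S-(\mathrm{vol}\, S)^2/\mathrm{vol}\, V$. *)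

theory Defs
  imports "HOL-Analysis.Analysis"
begin

definition simple_graph :: "('n \<Rightarrow> 'n \<Rightarrow> bool) \<Rightarrow> bool" where
  "simple_graph E \<longleftrightarrow> (\<forall>i j. E i j \<longrightarrow> E j i) \<and> (\<forall>i. \<not> E i i)"

definition graph_connected :: "('n \<Rightarrow> 'n \<Rightarrow> bool) \<Rightarrow> bool" where
  "graph_connected E \<longleftrightarrow> (\<forall>i j. E\<^sup>*\<^sup>* i j)"

definition adj_matrix :: "('n::finite \<Rightarrow> 'n \<Rightarrow> bool) \<Rightarrow> real^'n^'n" where
  "adj_matrix E = (\<chi> i j. if E i j then 1 else 0)"

definition deg :: "('n::finite \<Rightarrow> 'n \<Rightarrow> bool) \<Rightarrow> 'n \<Rightarrow> real" where
  "deg E i = real (card {j. E i j})"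

definition vol :: "('n::finite \<Rightarrow> 'n \<Rightarrow> bool) \<Rightarrow> 'n set \<Rightarrow> real" where
  "vol E S = (\<Sum>i\<in>S. deg E i)"

definition delta_vec :: "('n::finite \<Rightarrow> 'n \<Rightarrow> bool) \<Rightarrow> real^'n" where
  "delta_vec E = (\<chi> i. sqrt (deg E i))"

definition modularity_matrix :: "('n::finite \<Rightarrow> 'n \<Rightarrow> bool) \<Rightarrow> real^'n^'n" where
  "modularity_matrix E = (\<chi> i j. adj_matrix E $ i $ j / (sqrt (deg E i) * sqrt (deg E j))
      - (delta_vec E $ i * delta_vec E $ j) / vol E UNIV)"

definition indicator_vec :: "'n::finite set \<Rightarrow> real^'n" where
  "indicator_vec S = (\<chi> i. if i \<in> S then 1 else 0)"

definition modularity :: "('n::finite \<Rightarrow> 'n \<Rightarrow> bool) \<Rightarrow> 'n set \<Rightarrow> real" where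
  "modularity E S = indicator_vec S \<bullet> (adj_matrix E *v indicator_vec S) - (vol E S)^2 / vol E UNIV"

definition abs_vec :: "real^'n \<Rightarrow> real^'n" where
  "abs_vec v = (\<chi> i. \<bar>v $ i\<bar>)"

end

theory Submission
  imports Defs
begin

text \<open>
  The normalized adjacency matrix \<open>N = D^(-1/2) A D^(-1/2)\<close> is symmetric, fixes \<open>\<delta>\<close>,
  and \<open>N + I\<close> is positive semidefinite; the modularity matrix is its rank-one deflation along
  \<open>\<delta>\<close>. An eigenvector \<open>v\<close> of the modularity matrix with \<open>\<mu> \<noteq> 0\<close> is orthogonal to \<open>\<delta>\<close>, hence an
  eigenvector of \<open>N + I\<close> with eigenvalue \<open>\<mu> + 1\<close>. Projecting \<open>y = D^(1/2) 1\<^sub>S\<close> orthogonally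
  to \<open>\<delta>\<close> gives a vector \<open>u\<close> with \<open>u\<^sup>T N u = Q(S)\<close>, \<open>\<parallel>u\<parallel>\<^sup>2 = vol S vol S\<^sup>c / vol V\<close> and
  \<open>u\<^sup>T v = \<delta>\<^sup>T|v| / 2\<close>, so the Rayleigh bound \<open>u\<^sup>T (N + I) u \<ge> (\<mu> + 1) (u\<^sup>T v)\<^sup>2 / \<parallel>v\<parallel>\<^sup>2\<close>
  becomes \<open>Q(S) \<ge> (\<mu> + 1) cos\<^sup>2 \<theta> vol V / 4 - vol S vol S\<^sup>c / vol V\<close>, which is positive
  under the hypothesis.
\<close>

lemma inner_matrix_vector_mult_symmetric:
  fixes A :: "real^'n^'n"
  assumes "transpose A = A"
  shows "x \<bullet> (A *v y) = (A *v x) \<bullet> y"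
  by (metis assms dot_lmul_matrix transpose_matrix_vector)

lemma transpose_add_mat_1:
  fixes A :: "real^'n^'n"
  assumes "transpose A = A"
  shows "transpose (A + mat 1) = A + mat 1"
  using assms by (simp add: transpose_def mat_def vec_eq_iff)

lemma psd_eigenvector_quadratic_bound:
  fixes K :: "real^'n^'n"
  assumes sym: "transpose K = K" and psd: "\<And>w. 0 \<le> w \<bullet> (K *v w)"
    and eig: "K *v x = \<mu> *\<^sub>R x" and "x \<noteq> 0"
  shows "\<mu> * (u \<bullet> x)^2 / (x \<bullet> x) \<le> u \<bullet> (K *v u)"
proof -
  define t where "t = (u \<bullet> x) / (x \<bullet> x)"
  have "x \<bullet> x \<noteq> 0" using \<open>x \<noteq> 0\<close> by simp
  have "x \<bullet> (K *v u) = \<mu> * (u \<bullet> x)"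
    using inner_matrix_vector_mult_symmetric[OF sym, of x u] eig by (simp add: inner_commute)
  then have "(u - t *\<^sub>R x) \<bullet> (K *v (u - t *\<^sub>R x)) = u \<bullet> (K *v u) - \<mu> * (u \<bullet> x)^2 / (x \<bullet> x)"
    using \<open>x \<bullet> x \<noteq> 0\<close> eig
    by (simp add: t_def matrix_vector_mult_diff_distrib matrix_vector_mult_scaleR inner_diff
        inner_commute[of x u] field_simps power2_eq_square)
  then show ?thesis using psd[of "u - t *\<^sub>R x"] by simp
qed


definition deflation :: "real^'n^'n \<Rightarrow> real^'n \<Rightarrow> real^'n^'n" where
  "deflation N d = (\<chi> i j. N $ i $ j - d $ i * d $ j / (d \<bullet> d))"

lemma deflation_mult:
  "deflation N d *v w = N *v w - ((d \<bullet> w) / (d \<bullet> d)) *\<^sub>R d"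
  by (simp add: deflation_def matrix_vector_mult_def inner_vec_def vec_eq_iff algebra_simps
      sum_subtractf sum_distrib_left sum_divide_distrib)

lemma transpose_deflation:
  assumes "transpose N = N"
  shows "transpose (deflation N d) = deflation N d"
  using assms by (simp add: deflation_def transpose_def vec_eq_iff mult.commute)

lemma deflation_mult_self:
  assumes "N *v d = d"
  shows "deflation N d *v d = 0"
  using assms by (cases "d = 0") (simp_all add: deflation_mult)

lemma deflation_eigenvector_orthogonal:
  assumes "transpose N = N" and "N *v d = d"
    and "deflation N d *v x = \<mu> *\<^sub>R x" and "\<mu> \<noteq> 0"
  shows "x \<bullet> d = 0"
proof -
  have "\<mu> * (x \<bullet> d) = (deflation N d *v x) \<bullet> d"
    using assms(3) by simp
  also have "\<dots> = x \<bullet> (deflation N d *v d)"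
    by (simp add: inner_matrix_vector_mult_symmetric transpose_deflation assms(1))
  finally show ?thesis
    using deflation_mult_self[OF assms(2)] assms(4) by simp
qed


lemma deflation_quadratic_bound:
  fixes N :: "real^'n^'n"
  assumes sym: "transpose N = N" and fixed: "N *v d = d"
    and psd: "\<And>w. 0 \<le> w \<bullet> (N *v w) + w \<bullet> w"
    and eig: "deflation N d *v x = \<mu> *\<^sub>R x" and "x \<noteq> 0" and "\<mu> \<noteq> 0"
  shows "(\<mu> + 1) * (y \<bullet> x)^2 / (x \<bullet> x)
           \<le> y \<bullet> (deflation N d *v y) + y \<bullet> y - (y \<bullet> d)^2 / (d \<bullet> d)"
proof -
  let ?M = "deflation N d"
  define u where "u = y - ((y \<bullet> d) / (d \<bullet> d)) *\<^sub>R d"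
  have xd: "x \<bullet> d = 0"
    using deflation_eigenvector_orthogonal[OF sym fixed eig \<open>\<mu> \<noteq> 0\<close>] .
  have Md: "?M *v d = 0"
    using deflation_mult_self[OF fixed] .
  have ud: "u \<bullet> d = 0"
    by (cases "d = 0") (simp_all add: u_def inner_diff_left)
  have Nx: "(N + mat 1) *v x = (\<mu> + 1) *\<^sub>R x"
    using eig xd by (simp add: deflation_mult inner_commute matrix_vector_mult_add_rdistrib scaleR_add_left)
  have "(\<mu> + 1) * (u \<bullet> x)^2 / (x \<bullet> x) \<le> u \<bullet> ((N + mat 1) *v u)"
    by (rule psd_eigenvector_quadratic_bound[OF transpose_add_mat_1[OF sym] _ Nx \<open>x \<noteq> 0\<close>])
      (simp add: matrix_vector_mult_add_rdistrib inner_add_right psd)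
  also have "u \<bullet> ((N + mat 1) *v u) = u \<bullet> (?M *v u) + u \<bullet> u"
    using ud by (simp add: deflation_mult matrix_vector_mult_add_rdistrib inner_add_right inner_commute)
  also have "u \<bullet> (?M *v u) = y \<bullet> (?M *v y)"
    using Md inner_matrix_vector_mult_symmetric[OF transpose_deflation[OF sym, of d], of d y]
    by (simp add: u_def matrix_vector_mult_diff_distrib matrix_vector_mult_scaleR inner_diff_left)
  also have "u \<bullet> u = y \<bullet> y - (y \<bullet> d)^2 / (d \<bullet> d)"
    by (cases "d = 0") (simp_all add: u_def inner_diff inner_commute power2_eq_square field_simps)
  also have "u \<bullet> x = y \<bullet> x"
    using xd by (simp add: u_def inner_diff_left inner_commute[of d x])
  finally show ?thesis by simp
qed


definition norm_adj_matrix :: "('n::finite \<Rightarrow> 'n \<Rightarrow> bool) \<Rightarrow> real^'n^'n" where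
  "norm_adj_matrix E = (\<chi> i j. adj_matrix E $ i $ j / (sqrt (deg E i) * sqrt (deg E j)))"

definition sqrt_deg_indicator :: "('n::finite \<Rightarrow> 'n \<Rightarrow> bool) \<Rightarrow> 'n set \<Rightarrow> real^'n" where
  "sqrt_deg_indicator E S = (\<chi> i. if i \<in> S then sqrt (deg E i) else 0)"

lemma deg_pos_if_adjacent:
  fixes E :: "'n::finite \<Rightarrow> 'n \<Rightarrow> bool"
  assumes "E i j"
  shows "0 < deg E i"
  using assms by (auto simp: deg_def card_gt_0_iff)

lemma deg_eq_sum_adj_matrix:
  "deg E i = (\<Sum>j\<in>UNIV. adj_matrix E $ i $ j)"
  by (simp add: deg_def adj_matrix_def sum.If_cases)

lemma inner_delta_vec_self: "delta_vec E \<bullet> delta_vec E = vol E UNIV"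
  by (simp add: delta_vec_def inner_vec_def vol_def deg_def)

lemma norm_delta_vec: "norm (delta_vec E) = sqrt (vol E UNIV)"
  by (simp add: norm_eq_sqrt_inner inner_delta_vec_self)

lemma vol_Compl: "vol E (- S) = vol E UNIV - vol E S"
  by (simp add: vol_def Compl_eq_Diff_UNIV sum_diff)

lemma modularity_matrix_eq_deflation:
  "modularity_matrix E = deflation (norm_adj_matrix E) (delta_vec E)"
  by (simp add: modularity_matrix_def deflation_def norm_adj_matrix_def inner_delta_vec_self)

lemma transpose_norm_adj_matrix:
  assumes "simple_graph E"
  shows "transpose (norm_adj_matrix E) = norm_adj_matrix E"
  using assms by (auto simp: transpose_def norm_adj_matrix_def adj_matrix_def simple_graph_def vec_eq_iff)

lemma norm_adj_matrix_delta_vec: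
  assumes "simple_graph E"
  shows "norm_adj_matrix E *v delta_vec E = delta_vec E"
proof -
  have "(norm_adj_matrix E *v delta_vec E) $ i = delta_vec E $ i" for i
  proof -
    have "norm_adj_matrix E $ i $ j * sqrt (deg E j) = adj_matrix E $ i $ j / sqrt (deg E i)" for j
      using deg_pos_if_adjacent[of E j i] assms
      by (auto simp: norm_adj_matrix_def adj_matrix_def simple_graph_def)
    then have "(norm_adj_matrix E *v delta_vec E) $ i = deg E i / sqrt (deg E i)"
      by (simp add: matrix_vector_mult_def delta_vec_def deg_eq_sum_adj_matrix sum_divide_distrib)
    also have "\<dots> = delta_vec E $ i"
      by (cases "deg E i = 0") (simp_all add: delta_vec_def deg_def real_div_sqrt)
    finally show ?thesis .
  qed
  then show ?thesis by (simp add: vec_eq_iff)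
qed


lemma norm_adj_matrix_plus_id_nonneg:
  assumes "simple_graph E"
  shows "0 \<le> w \<bullet> (norm_adj_matrix E *v w) + w \<bullet> w"
proof -
  define a where "a i j = adj_matrix E $ i $ j" for i j
  define z where "z i = w $ i / sqrt (deg E i)" for i
  have a_sym: "a i j = a j i" for i j
    using assms by (simp add: a_def adj_matrix_def simple_graph_def)
  have cross: "w \<bullet> (norm_adj_matrix E *v w) = (\<Sum>i\<in>UNIV. \<Sum>j\<in>UNIV. a i j * z i * z j)"
    by (simp add: inner_vec_def matrix_vector_mult_def sum_distrib_left norm_adj_matrix_def
        a_def z_def mult_ac)
  have "(\<Sum>i\<in>UNIV. \<Sum>j\<in>UNIV. a i j * (z i)^2) = (\<Sum>i\<in>UNIV. deg E i * (z i)^2)"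
    by (simp add: deg_eq_sum_adj_matrix a_def sum_distrib_right)
  also have "\<dots> \<le> (\<Sum>i\<in>UNIV. w $ i * w $ i)"
    by (intro sum_mono) (simp add: z_def power_divide power2_eq_square deg_def)
  finally have diag: "(\<Sum>i\<in>UNIV. \<Sum>j\<in>UNIV. a i j * (z i)^2) \<le> w \<bullet> w"
    by (simp add: inner_vec_def)
  have swap: "(\<Sum>i\<in>UNIV. \<Sum>j\<in>UNIV. a i j * (z j)^2) = (\<Sum>i\<in>UNIV. \<Sum>j\<in>UNIV. a i j * (z i)^2)"
    by (subst sum.swap) (simp add: a_sym)
  have "0 \<le> (\<Sum>i\<in>UNIV. \<Sum>j\<in>UNIV. a i j * (z i + z j)^2)"
    by (intro sum_nonneg) (simp add: a_def adj_matrix_def)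
  also have "\<dots> = (\<Sum>i\<in>UNIV. \<Sum>j\<in>UNIV. a i j * (z i)^2) + (\<Sum>i\<in>UNIV. \<Sum>j\<in>UNIV. a i j * (z j)^2)
                  + 2 * (\<Sum>i\<in>UNIV. \<Sum>j\<in>UNIV. a i j * z i * z j)"
    by (simp add: power2_eq_square algebra_simps sum.distrib sum_distrib_left)
  finally show ?thesis
    using diag swap cross by linarith
qed


lemma inner_sqrt_deg_indicator_delta_vec:
  "sqrt_deg_indicator E S \<bullet> delta_vec E = vol E S"
proof -
  have "sqrt_deg_indicator E S \<bullet> delta_vec E = (\<Sum>i\<in>UNIV. if i \<in> S then deg E i else 0)"
    unfolding inner_vec_def by (rule sum.cong) (simp_all add: sqrt_deg_indicator_def delta_vec_def deg_def)
  then show ?thesis by (simp add: vol_def sum.If_cases)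
qed

lemma inner_sqrt_deg_indicator_self:
  "sqrt_deg_indicator E S \<bullet> sqrt_deg_indicator E S = vol E S"
  by (simp add: sqrt_deg_indicator_def inner_vec_def vol_def deg_def if_distrib sum.If_cases)

lemma modularity_eq_quadratic_form:
  assumes "simple_graph E"
  shows "modularity E S = sqrt_deg_indicator E S \<bullet> (modularity_matrix E *v sqrt_deg_indicator E S)"
proof -
  let ?y = "sqrt_deg_indicator E S"
  have "?y $ i * (norm_adj_matrix E $ i $ j * ?y $ j)
          = indicator_vec S $ i * (adj_matrix E $ i $ j * indicator_vec S $ j)" for i j
    using assms deg_pos_if_adjacent[of E i j] deg_pos_if_adjacent[of E j i]
    by (auto simp: sqrt_deg_indicator_def indicator_vec_def norm_adj_matrix_def adj_matrix_def
        simple_graph_def)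
  then have "?y \<bullet> (norm_adj_matrix E *v ?y) = indicator_vec S \<bullet> (adj_matrix E *v indicator_vec S)"
    by (simp add: inner_vec_def matrix_vector_mult_def sum_distrib_left)
  then show ?thesis
    by (simp add: modularity_def modularity_matrix_eq_deflation deflation_mult inner_diff_right
        inner_commute[of _ ?y] inner_sqrt_deg_indicator_delta_vec inner_delta_vec_self power2_eq_square)
qed

lemma delta_vec_inner_abs_vec:
  "delta_vec E \<bullet> abs_vec v = 2 * (sqrt_deg_indicator E {i. 0 \<le> v $ i} \<bullet> v) - delta_vec E \<bullet> v"
  unfolding inner_vec_def sum_distrib_left sum_subtractf[symmetric]
  by (rule sum.cong) (auto simp: delta_vec_def abs_vec_def sqrt_deg_indicator_def)


lemma cos_angle_bound_imp_pos:
  fixes Q a V X P \<mu> c :: real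
  assumes "0 \<le> X" and "0 \<le> V" and c: "c = 2 * P / (sqrt X * sqrt V)" and "0 < c"
    and hyp: "\<mu> + 1 > 4 * (a * (V - a) / V^2) * (1 / c^2)"
    and bound: "(\<mu> + 1) * P^2 / X \<le> Q + a - a^2 / V"
  shows "0 < Q"
proof -
  have "sqrt X * sqrt V \<noteq> 0"
    using \<open>0 < c\<close> c by auto
  then have "0 < X" "0 < V"
    using assms(1,2) by (simp_all add: order_less_le)
  then have "0 < sqrt X * sqrt V"
    by simp
  then have "0 < P"
    using \<open>0 < c\<close> c by (simp add: zero_less_divide_iff)
  have "4 * (a * (V - a) / V^2) * (1 / c^2) = (a - a^2 / V) * X / P^2"
    using \<open>0 < X\<close> \<open>0 < V\<close> \<open>0 < P\<close>
    by (simp add: c power_divide power_mult_distrib field_simps power2_eq_square)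
  with hyp have "(a - a^2 / V) * X / P^2 < \<mu> + 1" by simp
  then have "a - a^2 / V < (\<mu> + 1) * P^2 / X"
    using \<open>0 < X\<close> \<open>0 < P\<close> by (simp add: field_simps)
  with bound show ?thesis by simp
qed

theorem theorem5p2:
  fixes E :: "'n::finite \<Rightarrow> 'n \<Rightarrow> bool" and v :: "real^'n" and \<mu> :: real and \<theta> :: real
  assumes "simple_graph E" and "graph_connected E"
    and "v \<noteq> 0" and "modularity_matrix E *v v = \<mu> *\<^sub>R v" and "\<mu> > 0"
    and "\<theta> \<in> {0..<pi/2}"
    and "cos \<theta> = (delta_vec E \<bullet> abs_vec v) / (norm v * norm (delta_vec E))"
    and "\<mu> + 1 > 4 * (vol E {i. v $ i \<ge> 0} * vol E (- {i. v $ i \<ge> 0}) / (vol E UNIV)^2)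
                    * (1 / (cos \<theta>)^2)"
  shows "modularity E {i. v $ i \<ge> 0} > 0"
proof -
  let ?S = "{i. v $ i \<ge> 0}"
  let ?y = "sqrt_deg_indicator E ?S"
  note sym = transpose_norm_adj_matrix[OF assms(1)]
  note fixed = norm_adj_matrix_delta_vec[OF assms(1)]
  note eig = assms(4)[unfolded modularity_matrix_eq_deflation]
  have "v \<bullet> delta_vec E = 0"
    using deflation_eigenvector_orthogonal[OF sym fixed eig] \<open>\<mu> > 0\<close> by simp
  then have "cos \<theta> = 2 * (?y \<bullet> v) / (sqrt (v \<bullet> v) * sqrt (vol E UNIV))"
    using assms(7) unfolding delta_vec_inner_abs_vec norm_delta_vec
    by (simp add: inner_commute norm_eq_sqrt_inner)
  moreover have "0 < cos \<theta>"
    using assms(6) by (intro cos_gt_zero_pi) auto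
  moreover have "(\<mu> + 1) * (?y \<bullet> v)^2 / (v \<bullet> v)
      \<le> modularity E ?S + vol E ?S - (vol E ?S)^2 / vol E UNIV"
    using deflation_quadratic_bound[where y = ?y, OF sym fixed norm_adj_matrix_plus_id_nonneg[OF assms(1)]
        eig \<open>v \<noteq> 0\<close>] \<open>\<mu> > 0\<close>
    unfolding modularity_eq_quadratic_form[OF assms(1)] modularity_matrix_eq_deflation
      inner_sqrt_deg_indicator_self inner_sqrt_deg_indicator_delta_vec inner_delta_vec_self
    by simp
  moreover have "0 \<le> vol E UNIV"
    by (simp add: vol_def deg_def sum_nonneg)
  ultimately show ?thesis
    using cos_angle_bound_imp_pos[OF inner_ge_zero] assms(8)[unfolded vol_Compl] by blast
qed

end
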